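(* Let $L$ be a complex Leibniz algebra, let $I$ be the ideal generated by all squares $[x,x]$, $x\in L$, and suppose $L/I\cong\mathfrak{e}(2)$ and $I$, as a right $\mathfrak{e}(2)$-module via $(i,x+I)\mapsto[i,x]$, is isomorphic to the three-dimensional module with basis $X_1,X_2,X_3$ and action $(X_1,p_-)=-X_3$, $(X_2,p_+)=X_3$, $(X_1,l)=-X_1$, $(X_2,l)=X_2$ (all other products zero). Then there exist $\alpha_1,\alpha_2\in\mathbb C$ and a basis $\{l,p_+,p_-,X_1,X_2,X_3\}$ of $L$ (with $X_i\in I$) in which the only nonzero products are $[l,p_+]=p_+$, $[p_+,l]=-p_+$, $[l,p_-]=-p_-$, $[p_-,l]=p_-$, $[l,l]=\alpha_1X_3$, $[p_+,p_-]=\alpha_2X_3$, $[p_-,p_+]=-\alpha_2X_3$, $[X_1,p_-]=-X_3$, $[X_1,l]=-X_1$, $[X_2,p_+]=X_3$, $[X_2,l]=X_2$. (The algebra with this table is denoted $K_2(\alpha_1,\alpha_2)$.)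
   Context: A (right) Leibniz algebra is a vector space $L$ with a bilinear bracket satisfying $[[x,y],z]=[[x,z],y]+[x,[y,z]]$. The ideal $I$ generated by squares satisfies $[L,I]=0$, so $L/I$ is a Lie algebra and $I$ is a right $L/I$-module via $(i,x+I)\mapsto[i,x]$. $\mathfrak{e}(2)$ is the complex Lie algebra with basis $\{l,p_+,p_-\}$ and brackets $[l,p_+]=p_+$, $[l,p_-]=-p_-$, $[p_+,p_-]=0$. *)

theory Defs
  imports Complex_Main
begin

definition leibniz_algebra ::
  "(complex \<Rightarrow> 'a::ab_group_add \<Rightarrow> 'a) \<Rightarrow> ('a \<Rightarrow> 'a \<Rightarrow> 'a) \<Rightarrow> bool" where
  "leibniz_algebra smul br \<longleftrightarrow>
     vector_space smul \<and>
     (\<forall>x. Vector_Spaces.linear smul smul (br x)) \<and>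
     (\<forall>y. Vector_Spaces.linear smul smul (\<lambda>x. br x y)) \<and>
     (\<forall>x y z. br (br x y) z = br (br x z) y + br x (br y z))"

definition is_ideal ::
  "(complex \<Rightarrow> 'a::ab_group_add \<Rightarrow> 'a) \<Rightarrow> ('a \<Rightarrow> 'a \<Rightarrow> 'a) \<Rightarrow> 'a set \<Rightarrow> bool" where
  "is_ideal smul br J \<longleftrightarrow> module.subspace smul J \<and>
     (\<forall>x\<in>J. \<forall>y. br x y \<in> J \<and> br y x \<in> J)"

definition sq_ideal ::
  "(complex \<Rightarrow> 'a::ab_group_add \<Rightarrow> 'a) \<Rightarrow> ('a \<Rightarrow> 'a \<Rightarrow> 'a) \<Rightarrow> 'a set" where
  "sq_ideal smul br = \<Inter>{J. is_ideal smul br J \<and> (\<forall>x. br x x \<in> J)}"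

text \<open>The Lie algebra e(2) realised on complex^3, coordinates w.r.t. the
  basis (l, p_+, p_-): [l,p_+] = p_+, [l,p_-] = -p_-, [p_+,p_-] = 0.\<close>

type_synonym c3 = "complex \<times> complex \<times> complex"

definition c3_add :: "c3 \<Rightarrow> c3 \<Rightarrow> c3" where
  "c3_add u v = (case u of (a1,a2,a3) \<Rightarrow> case v of (b1,b2,b3) \<Rightarrow> (a1+b1, a2+b2, a3+b3))"

definition c3_smul :: "complex \<Rightarrow> c3 \<Rightarrow> c3" where
  "c3_smul c u = (case u of (a1,a2,a3) \<Rightarrow> (c*a1, c*a2, c*a3))"

definition e2_br :: "c3 \<Rightarrow> c3 \<Rightarrow> c3" where
  "e2_br u v = (case u of (a1,a2,a3) \<Rightarrow> case v of (b1,b2,b3) \<Rightarrow>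
      (0, a1*b2 - a2*b1, a3*b1 - a1*b3))"

text \<open>The three-dimensional right e(2)-module with basis X1,X2,X3 (coordinates)
  and action (X1,p_-) = -X3, (X2,p_+) = X3, (X1,l) = -X1, (X2,l) = X2,
  all other products of basis elements zero.\<close>

definition M_act :: "c3 \<Rightarrow> c3 \<Rightarrow> c3" where
  "M_act m u = (case m of (x1,x2,x3) \<Rightarrow> case u of (a,b,c) \<Rightarrow>
      (-(a*x1), a*x2, -(c*x1) + b*x2))"

text \<open>Multiplication table of K_2(alpha1,alpha2) in the basis
  l, p, q (= p_+, p_-), X1, X2, X3: all 36 products.\<close>

definition K2_table ::
  "(complex \<Rightarrow> 'a::ab_group_add \<Rightarrow> 'a) \<Rightarrow> ('a \<Rightarrow> 'a \<Rightarrow> 'a) \<Rightarrow> complex \<Rightarrow> complex \<Rightarrow>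
   'a \<Rightarrow> 'a \<Rightarrow> 'a \<Rightarrow> 'a \<Rightarrow> 'a \<Rightarrow> 'a \<Rightarrow> bool" where
  "K2_table smul br \<alpha>1 \<alpha>2 l p q X1 X2 X3 \<longleftrightarrow>
     br l l = smul \<alpha>1 X3 \<and> br l p = p \<and> br l q = - q \<and>
     br l X1 = 0 \<and> br l X2 = 0 \<and> br l X3 = 0 \<and>
     br p l = - p \<and> br p p = 0 \<and> br p q = smul \<alpha>2 X3 \<and>
     br p X1 = 0 \<and> br p X2 = 0 \<and> br p X3 = 0 \<and>
     br q l = q \<and> br q p = - smul \<alpha>2 X3 \<and> br q q = 0 \<and>
     br q X1 = 0 \<and> br q X2 = 0 \<and> br q X3 = 0 \<and>
     br X1 l = - X1 \<and> br X1 p = 0 \<and> br X1 q = - X3 \<and>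
     br X1 X1 = 0 \<and> br X1 X2 = 0 \<and> br X1 X3 = 0 \<and>
     br X2 l = X2 \<and> br X2 p = X3 \<and> br X2 q = 0 \<and>
     br X2 X1 = 0 \<and> br X2 X2 = 0 \<and> br X2 X3 = 0 \<and>
     br X3 l = 0 \<and> br X3 p = 0 \<and> br X3 q = 0 \<and>
     br X3 X1 = 0 \<and> br X3 X2 = 0 \<and> br X3 X3 = 0"

end

theory Submission imports Defs begin

text \<open>Lift the basis of \<open>e(2)\<close> along \<open>\<phi>\<close> to \<open>l\<^sub>0, p\<^sub>0, q\<^sub>0\<close> and pull the basis of the
  module back along \<open>\<psi>\<close> to \<open>X\<^sub>1, X\<^sub>2, X\<^sub>3\<close>; together they form a basis of \<open>L\<close>. Since
  \<open>[L, I] = 0\<close> and \<open>I\<close> acts as the module, every structure constant is known except the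
  \<open>I\<close>-components of the nine brackets among \<open>l\<^sub>0, p\<^sub>0, q\<^sub>0\<close>. The Leibniz identity on triples
  of basis vectors imposes linear relations on these 27 numbers, and after shifting
  \<open>l\<^sub>0, p\<^sub>0, q\<^sub>0\<close> by suitable elements of \<open>I\<close> only two of them survive: the coefficient
  \<open>\<alpha>\<^sub>1\<close> of \<open>X\<^sub>3\<close> in \<open>[l, l]\<close> and the coefficient \<open>\<alpha>\<^sub>2\<close> of \<open>X\<^sub>3\<close> in \<open>[p, q]\<close>.\<close>

locale leibniz =
  fixes smul :: "complex \<Rightarrow> 'a::ab_group_add \<Rightarrow> 'a"
    and br :: "'a \<Rightarrow> 'a \<Rightarrow> 'a"
  assumes leib: "leibniz_algebra smul br"
begin

sublocale vs: vector_space smul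
  using leib unfolding leibniz_algebra_def by blast

lemma br_right_hom: "module_hom smul smul (br x)"
  using leib unfolding leibniz_algebra_def module_hom_iff_linear by blast

lemma br_left_hom: "module_hom smul smul (\<lambda>x. br x y)"
  using leib unfolding leibniz_algebra_def module_hom_iff_linear by blast

lemma leibniz_identity: "br (br x y) z = br (br x z) y + br x (br y z)"
  using leib unfolding leibniz_algebra_def by blast

lemma br_add_right: "br x (y + z) = br x y + br x z"
  by (rule module_hom.add[OF br_right_hom])
lemma br_scale_right: "br x (smul c y) = smul c (br x y)"
  by (rule module_hom.scale[OF br_right_hom])
lemma br_scale_left: "br (smul c x) y = smul c (br x y)"
  using module_hom.scale[OF br_left_hom] by blast
lemma br_sum_right: "br x (sum f A) = (\<Sum>a\<in>A. br x (f a))"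
  by (rule module_hom.sum[OF br_right_hom])
lemma br_sum_left: "br (sum f A) y = (\<Sum>a\<in>A. br (f a) y)"
  using module_hom.sum[OF br_left_hom] by blast
lemma br_zero_right: "br x 0 = 0"
  by (rule module_hom.zero[OF br_right_hom])
lemma br_zero_left: "br 0 y = 0"
  using module_hom.zero[OF br_left_hom] by blast

text \<open>The right annihilator is an ideal, and it contains every square because the
  Leibniz identity for \<open>(x, y, y)\<close> reads \<open>[x, [y, y]] = 0\<close>.\<close>

lemma br_sq_ideal_eq_zero:
  assumes "i \<in> sq_ideal smul br"
  shows "br x i = 0"
proof -
  let ?Ann = "{i. \<forall>x. br x i = 0}"
  have "vs.subspace ?Ann"
    unfolding vs.subspace_def by (simp add: br_zero_right br_add_right br_scale_right)
  moreover have "br x (br i y) = 0" if "i \<in> ?Ann" for x i y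
    using that leibniz_identity[of x i y] by (simp add: br_zero_left)
  ultimately have "is_ideal smul br ?Ann"
    unfolding is_ideal_def by (simp add: br_zero_right)
  moreover have "br y y \<in> ?Ann" for y
    using leibniz_identity[of _ y y] by simp
  ultimately have "sq_ideal smul br \<subseteq> ?Ann"
    unfolding sq_ideal_def by blast
  with assms show ?thesis by blast
qed

end

definition coord3 :: "c3 \<Rightarrow> nat \<Rightarrow> complex" where
  "coord3 u k = (case u of (a, b, c) \<Rightarrow> if k = 0 then a else if k = 1 then b else c)"

definition coord6 :: "c3 \<Rightarrow> c3 \<Rightarrow> nat \<Rightarrow> complex" where
  "coord6 u v k = (if k < 3 then coord3 u k else coord3 v (k - 3))"

lemma coord6_simps [simp]:
  "coord6 (a, b, c) v 0 = a" "coord6 (a, b, c) v (Suc 0) = b" "coord6 (a, b, c) v 2 = c"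
  "coord6 u (d, f, g) 3 = d" "coord6 u (d, f, g) 4 = f" "coord6 u (d, f, g) 5 = g"
  by (simp_all add: coord6_def coord3_def)

lemma sum_lessThan_6: "(\<Sum>i<(6::nat). f i) = f 0 + f 1 + f 2 + f 3 + f 4 + f 5"
  by (simp add: eval_nat_numeral ac_simps)

lemma all_lessThan_6: "(\<forall>k<6. P k) \<longleftrightarrow> P 0 \<and> P (Suc 0) \<and> P 2 \<and> P 3 \<and> P 4 \<and> P (5::nat)"
proof -
  have "k < 6 \<longleftrightarrow> k = 0 \<or> k = Suc 0 \<or> k = 2 \<or> k = 3 \<or> k = 4 \<or> k = 5" for k :: nat
    by arith
  then show ?thesis by auto
qed

locale e2_extension = leibniz +
  fixes \<phi> :: "'a \<Rightarrow> c3" and \<psi> :: "'a \<Rightarrow> c3"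
  assumes phi_add: "\<And>x y. \<phi> (x + y) = c3_add (\<phi> x) (\<phi> y)"
    and phi_smul: "\<And>c x. \<phi> (smul c x) = c3_smul c (\<phi> x)"
    and phi_surj: "surj \<phi>"
    and phi_ker: "{x. \<phi> x = (0,0,0)} = sq_ideal smul br"
    and phi_br: "\<And>x y. \<phi> (br x y) = e2_br (\<phi> x) (\<phi> y)"
    and psi_add: "\<And>x y. x \<in> sq_ideal smul br \<Longrightarrow> y \<in> sq_ideal smul br \<Longrightarrow>
                    \<psi> (x + y) = c3_add (\<psi> x) (\<psi> y)"
    and psi_smul: "\<And>c x. x \<in> sq_ideal smul br \<Longrightarrow> \<psi> (smul c x) = c3_smul c (\<psi> x)"
    and psi_bij: "bij_betw \<psi> (sq_ideal smul br) UNIV"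
    and psi_act: "\<And>i x. i \<in> sq_ideal smul br \<Longrightarrow> \<psi> (br i x) = M_act (\<psi> i) (\<phi> x)"
begin

abbreviation I :: "'a set" where "I \<equiv> sq_ideal smul br"

lemma mem_I_iff: "x \<in> I \<longleftrightarrow> \<phi> x = (0, 0, 0)"
  using phi_ker by blast

lemma phi_zero: "\<phi> 0 = (0, 0, 0)"
proof -
  have "\<phi> 0 = c3_add (\<phi> 0) (\<phi> 0)" using phi_add[of 0 0] by simp
  then show ?thesis by (cases "\<phi> 0") (auto simp: c3_add_def)
qed

lemma zero_in_I: "0 \<in> I"
  using mem_I_iff phi_zero by simp

lemma add_in_I: "x \<in> I \<Longrightarrow> y \<in> I \<Longrightarrow> x + y \<in> I"
  by (simp add: mem_I_iff phi_add c3_add_def)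

lemma scale_in_I: "x \<in> I \<Longrightarrow> smul c x \<in> I"
  by (simp add: mem_I_iff phi_smul c3_smul_def)

lemma br_left_in_I: "x \<in> I \<Longrightarrow> br x y \<in> I"
  by (simp add: mem_I_iff phi_br e2_br_def split: prod.splits)

lemma psi_zero: "\<psi> 0 = (0, 0, 0)"
proof -
  have "\<psi> 0 = c3_add (\<psi> 0) (\<psi> 0)" using psi_add[of 0 0] zero_in_I by simp
  then show ?thesis by (cases "\<psi> 0") (auto simp: c3_add_def)
qed

lemma psi_inj: "x \<in> I \<Longrightarrow> y \<in> I \<Longrightarrow> \<psi> x = \<psi> y \<Longrightarrow> x = y"
  using psi_bij unfolding bij_betw_def inj_on_def by blast

subsection \<open>Coordinates\<close>

definition "l\<^sub>0 = inv \<phi> (1, 0, 0)"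
definition "p\<^sub>0 = inv \<phi> (0, 1, 0)"
definition "q\<^sub>0 = inv \<phi> (0, 0, 1)"
definition "X\<^sub>1 = inv_into I \<psi> (1, 0, 0)"
definition "X\<^sub>2 = inv_into I \<psi> (0, 1, 0)"
definition "X\<^sub>3 = inv_into I \<psi> (0, 0, 1)"

lemma phi_lifts: "\<phi> l\<^sub>0 = (1, 0, 0)" "\<phi> p\<^sub>0 = (0, 1, 0)" "\<phi> q\<^sub>0 = (0, 0, 1)"
  by (simp_all add: l\<^sub>0_def p\<^sub>0_def q\<^sub>0_def phi_surj surj_f_inv_f)

lemma X_in_I: "X\<^sub>1 \<in> I" "X\<^sub>2 \<in> I" "X\<^sub>3 \<in> I"
  using psi_bij by (simp_all add: X\<^sub>1_def X\<^sub>2_def X\<^sub>3_def bij_betw_def inv_into_into)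

lemma psi_X: "\<psi> X\<^sub>1 = (1, 0, 0)" "\<psi> X\<^sub>2 = (0, 1, 0)" "\<psi> X\<^sub>3 = (0, 0, 1)"
  using psi_bij by (simp_all add: X\<^sub>1_def X\<^sub>2_def X\<^sub>3_def bij_betw_def f_inv_into_f)

lemma phi_X: "\<phi> X\<^sub>1 = (0, 0, 0)" "\<phi> X\<^sub>2 = (0, 0, 0)" "\<phi> X\<^sub>3 = (0, 0, 0)"
  using X_in_I mem_I_iff by blast+

definition basis :: "nat \<Rightarrow> 'a" where
  "basis i = [l\<^sub>0, p\<^sub>0, q\<^sub>0, X\<^sub>1, X\<^sub>2, X\<^sub>3] ! i"

lemma basis_simps:
  "basis 0 = l\<^sub>0" "basis (Suc 0) = p\<^sub>0" "basis 1 = p\<^sub>0" "basis 2 = q\<^sub>0"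
  "basis 3 = X\<^sub>1" "basis 4 = X\<^sub>2" "basis 5 = X\<^sub>3"
  by (simp_all add: basis_def numeral_eq_Suc)

definition comb :: "(nat \<Rightarrow> complex) \<Rightarrow> 'a" where
  "comb x = (\<Sum>i<6. smul (x i) (basis i))"

lemma comb_expand:
  "comb x = smul (x 0) l\<^sub>0 + smul (x 1) p\<^sub>0 + smul (x 2) q\<^sub>0
    + smul (x 3) X\<^sub>1 + smul (x 4) X\<^sub>2 + smul (x 5) X\<^sub>3"
  unfolding comb_def sum_lessThan_6 by (simp add: basis_simps)

lemma comb_add: "comb x + comb y = comb (\<lambda>i. x i + y i)"
  unfolding comb_def by (simp add: vs.scale_left_distrib sum.distrib)

lemma comb_scale: "smul c (comb x) = comb (\<lambda>i. c * x i)"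
  unfolding comb_def by (simp add: vs.scale_sum_right)

lemma comb_uminus: "- comb x = comb (\<lambda>i. - x i)"
  unfolding comb_def by (simp add: sum_negf)

lemma comb_diff: "comb x - comb y = comb (\<lambda>i. x i - y i)"
  unfolding comb_def by (simp add: vs.scale_left_diff_distrib sum_subtractf)

lemma phi_comb: "\<phi> (comb x) = (x 0, x 1, x 2)"
  unfolding comb_expand
  by (simp add: phi_add phi_smul c3_add_def c3_smul_def phi_lifts phi_X)

lemma X_comb_in_I: "smul a X\<^sub>1 + smul b X\<^sub>2 + smul c X\<^sub>3 \<in> I"
  by (intro add_in_I scale_in_I X_in_I)

lemma psi_X_comb: "\<psi> (smul a X\<^sub>1 + smul b X\<^sub>2 + smul c X\<^sub>3) = (a, b, c)"
  by (simp add: psi_add psi_smul add_in_I scale_in_I X_in_I psi_X c3_add_def c3_smul_def)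

lemma comb_eq_0_iff: "comb x = 0 \<longleftrightarrow> (\<forall>k<6. x k = 0)"
proof
  assume x: "comb x = 0"
  then have "x 0 = 0" "x 1 = 0" "x 2 = 0"
    using phi_comb[of x] phi_zero by simp_all
  then have "\<psi> (comb x) = (x 3, x 4, x 5)"
    by (simp add: comb_expand psi_X_comb)
  then have "x 3 = 0" "x 4 = 0" "x 5 = 0"
    using x psi_zero by simp_all
  with \<open>x 0 = 0\<close> \<open>x 1 = 0\<close> \<open>x 2 = 0\<close> show "\<forall>k<6. x k = 0"
    by (simp add: all_lessThan_6)
next
  assume "\<forall>k<6. x k = 0"
  then show "comb x = 0" unfolding comb_def by simp
qed

lemma comb_eq_iff: "comb x = comb y \<longleftrightarrow> (\<forall>k<6. x k = y k)"
  using comb_eq_0_iff[of "\<lambda>i. x i - y i"] by (simp add: comb_diff[symmetric])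

definition lift :: "c3 \<Rightarrow> 'a" where
  "lift u = (case u of (a, b, c) \<Rightarrow> smul a l\<^sub>0 + smul b p\<^sub>0 + smul c q\<^sub>0)"

lemma phi_lift: "\<phi> (lift u) = u"
  by (cases u) (simp add: lift_def phi_add phi_smul c3_add_def c3_smul_def phi_lifts)

lemma diff_lift_in_I: "y - lift (\<phi> y) \<in> I"
proof -
  have "\<phi> y = c3_add (\<phi> (y - lift (\<phi> y))) (\<phi> y)"
    using phi_add[of "y - lift (\<phi> y)" "lift (\<phi> y)"] by (simp add: phi_lift)
  then show ?thesis
    unfolding mem_I_iff by (cases "\<phi> y"; cases "\<phi> (y - lift (\<phi> y))") (auto simp: c3_add_def)
qed

definition coords :: "'a \<Rightarrow> nat \<Rightarrow> complex" where
  "coords y = coord6 (\<phi> y) (\<psi> (y - lift (\<phi> y)))"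

lemma comb_coords: "comb (coords y) = y"
proof -
  obtain a b c where abc: "\<phi> y = (a, b, c)" by (cases "\<phi> y")
  obtain d f g where dfg: "\<psi> (y - lift (\<phi> y)) = (d, f, g)" by (cases "\<psi> (y - lift (\<phi> y))")
  have "smul d X\<^sub>1 + smul f X\<^sub>2 + smul g X\<^sub>3 = y - lift (\<phi> y)"
    using psi_inj[OF X_comb_in_I diff_lift_in_I] dfg psi_X_comb by simp
  then show ?thesis
    using abc dfg by (simp add: comb_expand coords_def lift_def algebra_simps)
qed

lemma coords_lower: "k < 3 \<Longrightarrow> coords y k = coord3 (\<phi> y) k"
  by (simp add: coords_def coord6_def)

lemma coords_in_I: "y \<in> I \<Longrightarrow> 3 \<le> k \<Longrightarrow> coords y k = coord3 (\<psi> y) (k - 3)"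
  using mem_I_iff by (simp add: coords_def coord6_def lift_def)

lemma coords_zero: "coords 0 k = 0"
  by (cases "k < 3") (simp_all add: coords_lower coords_in_I zero_in_I phi_zero psi_zero coord3_def)

subsection \<open>Structure constants\<close>

definition struct_const :: "nat \<Rightarrow> nat \<Rightarrow> nat \<Rightarrow> complex" where
  "struct_const i j = coords (br (basis i) (basis j))"

definition br_coords :: "(nat \<Rightarrow> complex) \<Rightarrow> (nat \<Rightarrow> complex) \<Rightarrow> nat \<Rightarrow> complex" where
  "br_coords x y k = (\<Sum>i<6. \<Sum>j<6. x i * y j * struct_const i j k)"

lemma br_basis: "br (basis i) (basis j) = comb (struct_const i j)"
  by (simp add: struct_const_def comb_coords)

lemma br_comb: "br (comb x) (comb y) = comb (br_coords x y)"
proof -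
  have "br (comb x) (comb y) = (\<Sum>i<6. \<Sum>j<6. smul (x i * y j) (br (basis i) (basis j)))"
    unfolding comb_def
    by (simp add: br_sum_left br_sum_right br_scale_left br_scale_right vs.scale_sum_right)
      (subst sum.swap, simp add: mult.commute)
  also have "\<dots> = (\<Sum>i<6. \<Sum>j<6. \<Sum>k<6. smul (x i * y j * struct_const i j k) (basis k))"
    unfolding br_basis comb_def by (simp add: vs.scale_sum_right)
  also have "\<dots> = (\<Sum>i<6. \<Sum>k<6. \<Sum>j<6. smul (x i * y j * struct_const i j k) (basis k))"
    by (rule sum.cong[OF refl], rule sum.swap)
  also have "\<dots> = (\<Sum>k<6. \<Sum>i<6. \<Sum>j<6. smul (x i * y j * struct_const i j k) (basis k))"
    by (rule sum.swap)
  also have "\<dots> = comb (br_coords x y)"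
    unfolding comb_def br_coords_def by (simp add: vs.scale_sum_left)
  finally show ?thesis .
qed

definition unit_coords :: "nat \<Rightarrow> nat \<Rightarrow> complex" where
  "unit_coords a i = (if i = a then 1 else 0)"

lemma comb_unit_coords:
  assumes "a < 6"
  shows "comb (unit_coords a) = basis a"
proof -
  have "smul (unit_coords a i) (basis i) = (if a = i then basis i else 0)" for i
    by (simp add: unit_coords_def)
  with assms show ?thesis by (simp add: comb_def sum.delta)
qed

lemma br_coords_unit_right:
  assumes "c < 6"
  shows "br_coords x (unit_coords c) k = (\<Sum>i<6. x i * struct_const i c k)"
proof -
  have "x i * unit_coords c j * struct_const i j k = (if c = j then x i * struct_const i j k else 0)"
    for i j
    by (simp add: unit_coords_def)
  with assms show ?thesis by (simp add: br_coords_def sum.delta)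
qed

lemma br_coords_unit_left:
  assumes "a < 6"
  shows "br_coords (unit_coords a) y k = (\<Sum>j<6. y j * struct_const a j k)"
proof -
  have "(\<Sum>j<6. unit_coords a i * y j * struct_const i j k)
      = (if a = i then (\<Sum>j<6. y j * struct_const i j k) else 0)" for i
    by (simp add: unit_coords_def)
  with assms show ?thesis by (simp add: br_coords_def sum.delta)
qed

lemma leibniz_struct_const:
  assumes "a < 6" "b < 6" "c < 6" "k < 6"
  shows "(\<Sum>i<6. struct_const a b i * struct_const i c k)
       = (\<Sum>i<6. struct_const a c i * struct_const i b k)
         + (\<Sum>j<6. struct_const b c j * struct_const a j k)"
proof -
  have "br (br (basis a) (basis b)) (basis c)
      = br (br (basis a) (basis c)) (basis b) + br (basis a) (br (basis b) (basis c))"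
    by (rule leibniz_identity)
  then have "br (comb (struct_const a b)) (comb (unit_coords c))
      = br (comb (struct_const a c)) (comb (unit_coords b))
        + br (comb (unit_coords a)) (comb (struct_const b c))"
    using assms by (simp only: br_basis comb_unit_coords)
  then have "comb (br_coords (struct_const a b) (unit_coords c))
      = comb (\<lambda>k. br_coords (struct_const a c) (unit_coords b) k
                 + br_coords (unit_coords a) (struct_const b c) k)"
    by (simp only: br_comb comb_add)
  with assms show ?thesis
    by (simp add: comb_eq_iff br_coords_unit_right br_coords_unit_left)
qed

lemma struct_const_lower:
  "k < 3 \<Longrightarrow> struct_const i j k = coord3 (e2_br (\<phi> (basis i)) (\<phi> (basis j))) k"
  by (simp add: struct_const_def coords_lower phi_br)

lemma struct_const_ideal_left:
  "basis i \<in> I \<Longrightarrow> 3 \<le> k \<Longrightarrow>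
     struct_const i j k = coord3 (M_act (\<psi> (basis i)) (\<phi> (basis j))) (k - 3)"
  by (simp add: struct_const_def coords_in_I br_left_in_I psi_act)

lemma struct_const_ideal_right: "basis j \<in> I \<Longrightarrow> struct_const i j k = 0"
  by (simp add: struct_const_def br_sq_ideal_eq_zero coords_zero)

lemmas struct_const_eval =
  struct_const_lower struct_const_ideal_left struct_const_ideal_right
  basis_simps phi_lifts phi_X psi_X X_in_I e2_br_def M_act_def coord3_def

lemma leibniz_constraints:
  "struct_const 2 0 3 = -2 * struct_const 0 2 3"
  "struct_const 1 0 5 = struct_const 0 0 4 - struct_const 0 1 5"
  "struct_const 1 0 3 = 0"
  "struct_const 1 0 4 = -2 * struct_const 0 1 4"
  "struct_const 2 0 4 = 0"
  "struct_const 2 0 5 = struct_const 0 0 3 - struct_const 0 2 5"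
  "struct_const 1 1 3 = 0" "struct_const 1 1 4 = 0"
  "struct_const 1 2 3 = 0" "struct_const 1 2 4 = 0"
  "struct_const 2 1 3 = 0" "struct_const 2 1 4 = 0"
  "struct_const 2 2 3 = 0" "struct_const 2 2 4 = 0"
  "struct_const 1 1 5 = - struct_const 0 1 4"
  "struct_const 2 2 5 = - struct_const 0 2 3"
  "struct_const 2 1 5 = struct_const 0 1 3 + struct_const 0 2 4 - struct_const 1 2 5"
proof -
  note L = leibniz_struct_const and eval = sum_lessThan_6 struct_const_eval
  show "struct_const 2 0 3 = -2 * struct_const 0 2 3"
    using L[of 0 0 2 3] by (simp add: eval; simp add: algebra_simps eq_neg_iff_add_eq_0)
  show "struct_const 1 0 5 = struct_const 0 0 4 - struct_const 0 1 5"
    using L[of 0 0 1 5] by (simp add: eval; simp add: algebra_simps eq_neg_iff_add_eq_0)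
  show "struct_const 1 0 3 = 0"
    using L[of 0 0 1 3] by (simp add: eval; simp add: algebra_simps eq_neg_iff_add_eq_0)
  show "struct_const 1 0 4 = -2 * struct_const 0 1 4"
    using L[of 0 0 1 4] by (simp add: eval; simp add: algebra_simps eq_neg_iff_add_eq_0)
  show "struct_const 2 0 4 = 0"
    using L[of 0 0 2 4] by (simp add: eval; simp add: algebra_simps eq_neg_iff_add_eq_0)
  show "struct_const 2 0 5 = struct_const 0 0 3 - struct_const 0 2 5"
    using L[of 0 0 2 5] by (simp add: eval; simp add: algebra_simps eq_neg_iff_add_eq_0)
  show "struct_const 1 1 3 = 0"
    using L[of 1 0 1 3] by (simp add: eval; simp add: algebra_simps eq_neg_iff_add_eq_0)
  show "struct_const 1 1 4 = 0"
    using L[of 1 0 1 4] by (simp add: eval; simp add: algebra_simps eq_neg_iff_add_eq_0)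
  show "struct_const 1 2 3 = 0"
    using L[of 1 0 2 3] by (simp add: eval; simp add: algebra_simps eq_neg_iff_add_eq_0)
  show "struct_const 1 2 4 = 0"
    using L[of 1 0 2 4] by (simp add: eval; simp add: algebra_simps eq_neg_iff_add_eq_0)
  show "struct_const 2 1 3 = 0"
    using L[of 2 0 1 3] by (simp add: eval; simp add: algebra_simps eq_neg_iff_add_eq_0)
  show "struct_const 2 1 4 = 0"
    using L[of 2 0 1 4] by (simp add: eval; simp add: algebra_simps eq_neg_iff_add_eq_0)
  show "struct_const 2 2 3 = 0"
    using L[of 2 0 2 3] by (simp add: eval; simp add: algebra_simps eq_neg_iff_add_eq_0)
  show "struct_const 2 2 4 = 0"
    using L[of 2 0 2 4] by (simp add: eval; simp add: algebra_simps eq_neg_iff_add_eq_0)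
  have "struct_const 1 0 4 = 2 * struct_const 1 1 5"
    using L[of 1 0 1 5] by (simp add: eval; simp add: algebra_simps eq_neg_iff_add_eq_0)
  with \<open>struct_const 1 0 4 = -2 * struct_const 0 1 4\<close>
  show "struct_const 1 1 5 = - struct_const 0 1 4" by simp
  have "struct_const 2 0 3 = 2 * struct_const 2 2 5"
    using L[of 2 0 2 5] by (simp add: eval; simp add: algebra_simps eq_neg_iff_add_eq_0)
  with \<open>struct_const 2 0 3 = -2 * struct_const 0 2 3\<close>
  show "struct_const 2 2 5 = - struct_const 0 2 3" by simp
  show "struct_const 2 1 5 = struct_const 0 1 3 + struct_const 0 2 4 - struct_const 1 2 5"
    using L[of 0 1 2 5] by (simp add: eval; simp add: algebra_simps eq_neg_iff_add_eq_0)
qed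

subsection \<open>The new basis\<close>

text \<open>Shifting \<open>l\<^sub>0, p\<^sub>0, q\<^sub>0\<close> by elements of \<open>I\<close> changes their brackets only through
  \<open>[X\<^sub>1, l\<^sub>0] = -X\<^sub>1\<close>, \<open>[X\<^sub>2, l\<^sub>0] = X\<^sub>2\<close>, \<open>[X\<^sub>1, q\<^sub>0] = -X\<^sub>3\<close>, \<open>[X\<^sub>2, p\<^sub>0] = X\<^sub>3\<close>. The shifts
  below cancel every \<open>I\<close>-component of the brackets among \<open>l, p, q\<close> that the Leibniz
  constraints leave free, except the \<open>X\<^sub>3\<close>-components of \<open>[l, l]\<close> and \<open>[p, q]\<close>.\<close>

definition "l_coords = coord6 (1, 0, 0) (struct_const 0 0 3, - struct_const 0 0 4, 0)"
definition "p_coords = coord6 (0, 1, 0)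
  (struct_const 0 1 3, struct_const 0 1 4, struct_const 0 1 5 - struct_const 0 0 4)"
definition "q_coords = coord6 (0, 0, 1)
  (- struct_const 0 2 3, - struct_const 0 2 4, struct_const 0 0 3 - struct_const 0 2 5)"

lemma X_eq_comb:
  "X\<^sub>1 = comb (coord6 (0, 0, 0) (1, 0, 0))"
  "X\<^sub>2 = comb (coord6 (0, 0, 0) (0, 1, 0))"
  "X\<^sub>3 = comb (coord6 (0, 0, 0) (0, 0, 1))"
  by (simp_all add: comb_expand)

lemma K2_table_new_basis:
  "K2_table smul br (struct_const 0 0 5) (struct_const 1 2 5 - struct_const 0 1 3)
     (comb l_coords) (comb p_coords) (comb q_coords) X\<^sub>1 X\<^sub>2 X\<^sub>3"
  unfolding K2_table_def X_eq_comb br_comb comb_scale comb_uminus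
  by (intro conjI; simp add: comb_eq_iff comb_eq_0_iff all_lessThan_6 br_coords_def
      sum_lessThan_6 leibniz_constraints[unfolded One_nat_def] struct_const_eval
      l_coords_def p_coords_def q_coords_def algebra_simps)

lemma new_basis_distinct: "distinct [comb l_coords, comb p_coords, comb q_coords, X\<^sub>1, X\<^sub>2, X\<^sub>3]"
  by (simp add: X_eq_comb comb_eq_iff all_lessThan_6 l_coords_def p_coords_def q_coords_def)

lemma new_basis_independent:
  "vs.independent {comb l_coords, comb p_coords, comb q_coords, X\<^sub>1, X\<^sub>2, X\<^sub>3}" (is "vs.independent ?B")
proof
  assume "vs.dependent ?B"
  then obtain u where u: "\<exists>v\<in>?B. u v \<noteq> 0" "(\<Sum>v\<in>?B. smul (u v) v) = 0"
    by (auto simp: vs.dependent_finite)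
  have "smul (u (comb l_coords)) (comb l_coords)
      + (smul (u (comb p_coords)) (comb p_coords) + (smul (u (comb q_coords)) (comb q_coords)
      + (smul (u X\<^sub>1) X\<^sub>1 + (smul (u X\<^sub>2) X\<^sub>2 + smul (u X\<^sub>3) X\<^sub>3)))) = 0"
    using u(2) new_basis_distinct by simp
  then have "u (comb l_coords) = 0 \<and> u (comb p_coords) = 0 \<and> u (comb q_coords) = 0
      \<and> u X\<^sub>1 = 0 \<and> u X\<^sub>2 = 0 \<and> u X\<^sub>3 = 0"
    unfolding X_eq_comb comb_scale comb_add comb_eq_0_iff all_lessThan_6
    by (simp add: l_coords_def p_coords_def q_coords_def, elim conjE, simp)
  with u(1) show False by auto
qed

lemma new_basis_span:
  "vs.span {comb l_coords, comb p_coords, comb q_coords, X\<^sub>1, X\<^sub>2, X\<^sub>3} = UNIV"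
proof -
  have "y \<in> vs.span {comb l_coords, comb p_coords, comb q_coords, X\<^sub>1, X\<^sub>2, X\<^sub>3}" for y
  proof -
    define x where "x = coords y"
    have "y = smul (x 0) (comb l_coords) + smul (x 1) (comb p_coords) + smul (x 2) (comb q_coords)
       + smul (x 3 - x 0 * struct_const 0 0 3 - x 1 * struct_const 0 1 3 + x 2 * struct_const 0 2 3) X\<^sub>1
       + smul (x 4 + x 0 * struct_const 0 0 4 - x 1 * struct_const 0 1 4 + x 2 * struct_const 0 2 4) X\<^sub>2
       + smul (x 5 - x 1 * (struct_const 0 1 5 - struct_const 0 0 4)
               - x 2 * (struct_const 0 0 3 - struct_const 0 2 5)) X\<^sub>3"
      unfolding X_eq_comb comb_scale comb_add comb_coords[of y, folded x_def, symmetric] comb_eq_iff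
        all_lessThan_6
      by (simp add: l_coords_def p_coords_def q_coords_def algebra_simps)
    then show ?thesis
      by (simp add: vs.span_add vs.span_scale vs.span_base)
  qed
  then show ?thesis by blast
qed

end

theorem mainTheorem4:
  fixes smul :: "complex \<Rightarrow> 'a::ab_group_add \<Rightarrow> 'a"
    and br :: "'a \<Rightarrow> 'a \<Rightarrow> 'a"
    and \<phi> :: "'a \<Rightarrow> c3" and \<psi> :: "'a \<Rightarrow> c3"
  assumes leib: "leibniz_algebra smul br"
    \<comment> \<open>phi induces a Lie algebra isomorphism L/I \<cong> e(2)\<close>
    and phi_add: "\<And>x y. \<phi> (x + y) = c3_add (\<phi> x) (\<phi> y)"
    and phi_smul: "\<And>c x. \<phi> (smul c x) = c3_smul c (\<phi> x)"
    and phi_surj: "surj \<phi>"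
    and phi_ker: "{x. \<phi> x = (0,0,0)} = sq_ideal smul br"
    and phi_br: "\<And>x y. \<phi> (br x y) = e2_br (\<phi> x) (\<phi> y)"
    \<comment> \<open>psi is an isomorphism of right e(2)-modules I \<cong> M\<close>
    and psi_add: "\<And>x y. x \<in> sq_ideal smul br \<Longrightarrow> y \<in> sq_ideal smul br \<Longrightarrow>
                    \<psi> (x + y) = c3_add (\<psi> x) (\<psi> y)"
    and psi_smul: "\<And>c x. x \<in> sq_ideal smul br \<Longrightarrow> \<psi> (smul c x) = c3_smul c (\<psi> x)"
    and psi_bij: "bij_betw \<psi> (sq_ideal smul br) UNIV"
    and psi_act: "\<And>i x. i \<in> sq_ideal smul br \<Longrightarrow> \<psi> (br i x) = M_act (\<psi> i) (\<phi> x)"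
  shows "\<exists>\<alpha>1 \<alpha>2 l p q X1 X2 X3.
           distinct [l, p, q, X1, X2, X3] \<and>
           module.independent smul {l, p, q, X1, X2, X3} \<and>
           module.span smul {l, p, q, X1, X2, X3} = UNIV \<and>
           X1 \<in> sq_ideal smul br \<and> X2 \<in> sq_ideal smul br \<and> X3 \<in> sq_ideal smul br \<and>
           K2_table smul br \<alpha>1 \<alpha>2 l p q X1 X2 X3"
proof -
  interpret e2_extension smul br \<phi> \<psi>
    by unfold_locales (fact leib phi_add phi_smul phi_surj phi_ker phi_br
        psi_add psi_smul psi_bij psi_act)+
  show ?thesis
    using new_basis_distinct new_basis_independent new_basis_span X_in_I K2_table_new_basis
    by blast
qed

end
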